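(* Let the delays $\tau_{i,k}$, $i,k\in\{1,2,3\}$, be independent real random variables each having a continuous (density) distribution, and let $|h_{1,1}|,|h_{2,2}|,|h_{3,3}|>0$ and $\sigma_1^2,\sigma_2^2,\sigma_3^2>0$ be fixed. Set $S=\tau_{1,3}-\tau_{1,2}+\tau_{2,1}-\tau_{2,3}+\tau_{3,2}-\tau_{3,1}$, $\Delta f_{\min}=1/S$, $\Delta\tau_1=-\tau_{1,1}+\tau_{2,1}-\tau_{2,3}+\tau_{1,3}$, $\Delta\tau_2=-\tau_{2,2}+\tau_{2,3}-\tau_{1,3}+\tau_{1,2}$, $\Delta\tau_3=-\tau_{3,3}+\tau_{3,2}-\tau_{1,2}+\tau_{1,3}$, and for a positive integer $n$ $$R(n)=\sum_{i=1}^{3}\log_2\!\left(1+\frac{|h_{i,i}|^2\sin^2\!\big(\pi n\,\Delta f_{\min}\Delta\tau_i\big)}{\sigma_i^2}\right).$$ Then almost surely, for every $\epsilon>0$ there exists a positive integer $n$ with $$R(n)\ \ge\ \sum_{i=1}^{3}\log_2\!\left(1+\frac{|h_{i,i}|^2}{\sigma_i^2}\right)-\epsilon,$$ i.e. the upper bound $\sum_i\log_2(1+|h_{i,i}|^2/\sigma_i^2)$ on the sum-rate is approached arbitrarily closely by choosing the subcarrier spacing $\Delta f=n\Delta f_{\min}$ with sufficiently large available bandwidth.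
   Context: Setting: three-user-pair line-of-sight interference channel with single antennas and two subcarriers at spacing $\Delta f=f^{(2)}-f^{(1)}=n\Delta f_{\min}$, for which interference alignment is feasible. With optimal amplitude choice of the precoders and receive filters, the effective direct channel of pair $i$ under this interference alignment scheme has amplitude $|\bar h_i|=|h_{i,i}|\,|\sin(\pi n\Delta f_{\min}\Delta\tau_i)|\le|h_{i,i}|$, where $|h_{i,i}|$ is the amplitude and $\tau_{i,i}$ the delay of the direct channel of pair $i$; $\sigma_i^2$ is the noise variance at receiver $i$, and $R(n)$ is the resulting sum-rate. *)

theory Defs
  imports "HOL-Probability.Probability"
begin

text \<open>Delays are indexed tau i k for i, k in {1,2,3}.\<close>

definition S_sum :: "(nat \<Rightarrow> nat \<Rightarrow> real) \<Rightarrow> real" where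
  "S_sum t = t 1 3 - t 1 2 + t 2 1 - t 2 3 + t 3 2 - t 3 1"

definition df_min :: "(nat \<Rightarrow> nat \<Rightarrow> real) \<Rightarrow> real" where
  "df_min t = 1 / S_sum t"

definition dtau :: "(nat \<Rightarrow> nat \<Rightarrow> real) \<Rightarrow> nat \<Rightarrow> real" where
  "dtau t i = (if i = 1 then - t 1 1 + t 2 1 - t 2 3 + t 1 3
               else if i = 2 then - t 2 2 + t 2 3 - t 1 3 + t 1 2
               else - t 3 3 + t 3 2 - t 1 2 + t 1 3)"

text \<open>h i = |h_{i,i}|, s2 i = sigma_i^2.\<close>
definition sum_rate ::
  "(nat \<Rightarrow> real) \<Rightarrow> (nat \<Rightarrow> real) \<Rightarrow> (nat \<Rightarrow> nat \<Rightarrow> real) \<Rightarrow> nat \<Rightarrow> real" where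
  "sum_rate h s2 t n = (\<Sum>i\<in>{1,2,3}.
     log 2 (1 + (h i)\<^sup>2 * (sin (pi * real n * df_min t * dtau t i))\<^sup>2 / s2 i))"

definition rate_bound :: "(nat \<Rightarrow> real) \<Rightarrow> (nat \<Rightarrow> real) \<Rightarrow> real" where
  "rate_bound h s2 = (\<Sum>i\<in>{1,2,3}. log 2 (1 + (h i)\<^sup>2 / s2 i))"

end

theory Submission
  imports Defs "HOL-Analysis.Kronecker_Approximation_Theorem"
begin

text \<open>
  With \<open>\<theta>\<^sub>i = \<Delta>\<tau>\<^sub>i / S\<close>, the \<open>i\<close>-th summand of \<open>R(n)\<close> involves \<open>sin\<^sup>2(\<pi> n \<theta>\<^sub>i)\<close>, which is close
  to \<open>1\<close> when \<open>n \<theta>\<^sub>i\<close> is close to \<open>1/2\<close> modulo \<open>1\<close>. By Kronecker's simultaneous approximation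
  theorem a single \<open>n \<ge> 1\<close> achieves this for all three \<open>i\<close> as soon as \<open>1, \<theta>\<^sub>1, \<theta>\<^sub>2, \<theta>\<^sub>3\<close> are
  linearly independent over \<open>\<int>\<close>, i.e. no nontrivial integer combination of
  \<open>S, \<Delta>\<tau>\<^sub>1, \<Delta>\<tau>\<^sub>2, \<Delta>\<tau>\<^sub>3\<close> vanishes. Such a combination is a linear form in the independent
  delays with a nonzero coefficient (\<open>\<tau>\<^sub>3\<^sub>,\<^sub>1\<close> occurs only in \<open>S\<close>, \<open>\<tau>\<^sub>i\<^sub>,\<^sub>i\<close> only in \<open>\<Delta>\<tau>\<^sub>i\<close>),
  so it vanishes with probability zero, a variable with a density having no atoms; and there
  are only countably many combinations.
\<close>

lemma (in prob_space) AE_neq_indep_density: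
  fixes X Z :: "'a \<Rightarrow> real"
  assumes ind: "indep_var borel X borel Z" and dens: "distributed M lborel X f"
  shows "AE \<omega> in M. X \<omega> \<noteq> Z \<omega>"
proof -
  have [measurable]: "X \<in> borel_measurable M" "Z \<in> borel_measurable M"
    using indep_var_rv1[OF ind] indep_var_rv2[OF ind] by simp_all
  have [measurable]: "f \<in> borel_measurable lborel"
    using dens by (simp add: distributed_def)
  have no_atom: "emeasure (distr M borel X) {z} = 0" for z
  proof -
    have "emeasure (distr M borel X) {z} = emeasure (distr M lborel X) {z}"
      by (simp add: emeasure_distr)
    also have "\<dots> = (\<integral>\<^sup>+ x. f x * indicator {z} x \<partial>lborel)"
      using dens by (simp add: distributed_def emeasure_density)
    also have "\<dots> = 0"
      by (rule nn_integral_null_set) auto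
    finally show ?thesis .
  qed
  define D where "D = {p \<in> space (borel \<Otimes>\<^sub>M borel). fst p = (snd p :: real)}"
  have [measurable]: "D \<in> sets (borel \<Otimes>\<^sub>M borel)"
    unfolding D_def by measurable
  interpret X: prob_space "distr M borel X" by (rule prob_space_distr) simp
  interpret Z: prob_space "distr M borel Z" by (rule prob_space_distr) simp
  interpret XZ: pair_sigma_finite "distr M borel X" "distr M borel Z" ..
  have "emeasure M ((\<lambda>\<omega>. (X \<omega>, Z \<omega>)) -` D \<inter> space M)
      = emeasure (distr M borel X \<Otimes>\<^sub>M distr M borel Z) D"
    using ind by (simp add: emeasure_distr[symmetric] indep_var_distribution_eq)
  also have "\<dots> = (\<integral>\<^sup>+ z. emeasure (distr M borel X) ((\<lambda>x. (x, z)) -` D) \<partial>distr M borel Z)"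
    by (rule XZ.emeasure_pair_measure_alt2) simp
  also have "\<dots> = 0"
  proof -
    have "(\<lambda>x. (x, z)) -` D = {z}" for z
      by (auto simp: D_def space_pair_measure)
    then show ?thesis
      by (simp add: no_atom)
  qed
  finally show ?thesis
    by (subst AE_iff_measurable[where N = "(\<lambda>\<omega>. (X \<omega>, Z \<omega>)) -` D \<inter> space M"])
       (auto simp: D_def space_pair_measure)
qed

lemma (in prob_space) AE_lincomb_indep_nonzero:
  fixes X :: "'i \<Rightarrow> 'a \<Rightarrow> real" and w :: "'i \<Rightarrow> real"
  assumes ind: "indep_vars (\<lambda>_. borel) X I" and "finite I" and v: "v \<in> I"
    and dens: "distributed M lborel (X v) f" and wv: "w v \<noteq> 0"
  shows "AE \<omega> in M. (\<Sum>p\<in>I. w p * X p \<omega>) \<noteq> 0"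
proof -
  define B where "B = I - {v}"
  define G where "G y = - (\<Sum>p\<in>B. w p * y p) / w v" for y :: "'i \<Rightarrow> real"
  have "indep_var (PiM {v} (\<lambda>_. borel)) (\<lambda>\<omega>. restrict (\<lambda>i. X i \<omega>) {v})
      (PiM B (\<lambda>_. borel)) (\<lambda>\<omega>. restrict (\<lambda>i. X i \<omega>) B)"
    by (rule indep_var_restrict[OF ind]) (use v in \<open>auto simp: B_def\<close>)
  from indep_var_compose[OF this, of "\<lambda>y. y v" borel G borel]
  have "indep_var borel (X v) borel (\<lambda>\<omega>. G (restrict (\<lambda>i. X i \<omega>) B))"
    unfolding G_def B_def by (simp add: o_def)
  from AE_neq_indep_density[OF this dens]
  show ?thesis
  proof (rule eventually_mono)
    fix \<omega>
    assume "X v \<omega> \<noteq> G (restrict (\<lambda>i. X i \<omega>) B)"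
    moreover have "(\<Sum>p\<in>I. w p * X p \<omega>) = w v * X v \<omega> + (\<Sum>p\<in>B. w p * X p \<omega>)"
      unfolding B_def using \<open>finite I\<close> v by (simp add: sum.remove)
    ultimately show "(\<Sum>p\<in>I. w p * X p \<omega>) \<noteq> 0"
      using wv by (auto simp: G_def field_simps cong: sum.cong)
  qed
qed

definition int_independent :: "(nat \<Rightarrow> real) \<Rightarrow> nat \<Rightarrow> bool" where
  "int_independent \<theta> n \<longleftrightarrow>
     (\<forall>a::nat \<Rightarrow> int. (\<Sum>i\<le>n. of_int (a i) * \<theta> i) = 0 \<longrightarrow> (\<forall>i\<le>n. a i = 0))"

lemma (in prob_space) AE_int_independent:
  fixes \<theta> :: "'a \<Rightarrow> nat \<Rightarrow> real"
  assumes "\<And>a. \<exists>i\<le>n. a i \<noteq> 0 \<Longrightarrow> AE \<omega> in M. (\<Sum>i\<le>n. of_int (a i) * \<theta> \<omega> i) \<noteq> 0"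
  shows "AE \<omega> in M. int_independent (\<theta> \<omega>) n"
proof -
  have "AE \<omega> in M. \<forall>a\<in>{..n} \<rightarrow>\<^sub>E UNIV.
          (\<exists>i\<le>n. a i \<noteq> 0) \<longrightarrow> (\<Sum>i\<le>n. of_int (a i) * \<theta> \<omega> i) \<noteq> 0"
    by (subst AE_ball_countable) (auto intro: countable_PiE assms)
  then show ?thesis
  proof (rule eventually_mono)
    fix \<omega>
    assume nonzero: "\<forall>a\<in>{..n} \<rightarrow>\<^sub>E UNIV.
      (\<exists>i\<le>n. a i \<noteq> 0) \<longrightarrow> (\<Sum>i\<le>n. of_int (a i) * \<theta> \<omega> i) \<noteq> 0"
    show "int_independent (\<theta> \<omega>) n"
      unfolding int_independent_def
    proof (rule allI, rule impI)
      fix a :: "nat \<Rightarrow> int"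
      assume "(\<Sum>i\<le>n. of_int (a i) * \<theta> \<omega> i) = 0"
      then have "(\<Sum>i\<le>n. of_int (restrict a {..n} i) * \<theta> \<omega> i) = 0"
        by simp
      moreover have "restrict a {..n} \<in> {..n} \<rightarrow>\<^sub>E UNIV"
        by simp
      ultimately have "\<not> (\<exists>i\<le>n. restrict a {..n} i \<noteq> 0)"
        using nonzero by blast
      then show "\<forall>i\<le>n. a i = 0"
        by simp
    qed
  qed
qed

lemma int_independent_inj_on:
  assumes "int_independent \<theta> n"
  shows "inj_on \<theta> {..n}"
proof (rule inj_onI, rule ccontr)
  fix i j
  assume ij: "i \<in> {..n}" "j \<in> {..n}" "\<theta> i = \<theta> j" "i \<noteq> j"
  define a :: "nat \<Rightarrow> int" where "a l = of_bool (l = i) - of_bool (l = j)" for l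
  have "(\<Sum>l\<le>n. of_int (a l) * \<theta> l) = (\<Sum>l\<le>n. (if l = i then \<theta> l else 0) - (if l = j then \<theta> l else 0))"
    by (intro sum.cong) (auto simp: a_def)
  also have "\<dots> = 0"
    using ij by (simp add: sum_subtractf)
  finally have "a i = 0"
    using assms ij unfolding int_independent_def by auto
  then show False
    using ij by (simp add: a_def)
qed

lemma int_independent_imp_independent:
  assumes ind: "int_independent \<theta> n"
  shows "module.independent (\<lambda>r x. of_int r * x) (\<theta> ` {..n})"
proof -
  interpret Modules.module "\<lambda>r x. of_int r * x :: real"
    by unfold_locales (simp_all add: algebra_simps)
  show ?thesis
    unfolding independent_explicit_module
  proof (intro allI impI)
    fix T u v
    assume T: "finite T" "T \<subseteq> \<theta> ` {..n}" "(\<Sum>v\<in>T. of_int (u v) * v) = 0" "v \<in> T"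
    define a where "a i = (if \<theta> i \<in> T then u (\<theta> i) else 0)" for i
    have "(\<Sum>i\<le>n. of_int (a i) * \<theta> i) = (\<Sum>w\<in>\<theta> ` {..n}. if w \<in> T then of_int (u w) * w else 0)"
      by (auto simp: sum.reindex[OF int_independent_inj_on[OF ind]] a_def intro!: sum.cong)
    also have "\<dots> = (\<Sum>w\<in>T. of_int (u w) * w)"
      using T(2) by (simp add: sum.If_cases Int_absorb1)
    finally have "\<forall>i\<le>n. a i = 0"
      using ind T(3) unfolding int_independent_def by auto
    moreover obtain i where "i \<le> n" "v = \<theta> i"
      using T(2,4) by auto
    ultimately show "u v = 0"
      using T(4) by (auto simp: a_def)
  qed
qed

lemma sin_sq_ge_near_half_int:
  fixes y \<delta> :: real and m :: int
  assumes "\<bar>y - of_int m - 1/2\<bar> < \<delta>"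
  shows "1 - (pi * \<delta>)\<^sup>2 \<le> (sin (pi * y))\<^sup>2"
proof -
  define e where "e = y - of_int m - 1/2"
  have y: "pi * y = pi * (of_int m + 1/2) + pi * e"
    by (simp add: e_def algebra_simps)
  have "cos (pi * (of_int m + 1/2)) = 0"
    by (intro iffD2[OF cos_zero_iff_int] exI[of _ "2 * m + 1"]) (simp add: field_simps)
  then have "(sin (pi * y))\<^sup>2 = (sin (pi * (of_int m + 1/2)))\<^sup>2 * (cos (pi * e))\<^sup>2"
    unfolding y sin_add by (simp add: power_mult_distrib)
  also have "\<dots> = 1 - (sin (pi * e))\<^sup>2"
    using \<open>cos _ = 0\<close> by (simp add: sin_squared_eq[of "pi * (of_int m + 1/2)"] cos_squared_eq[of "pi * e"])
  finally have "(sin (pi * y))\<^sup>2 = 1 - (sin (pi * e))\<^sup>2" .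
  moreover have "\<bar>sin (pi * e)\<bar> \<le> pi * \<delta>"
  proof -
    have "\<bar>sin (pi * e)\<bar> \<le> pi * \<bar>e\<bar>"
      using abs_sin_x_le_abs_x[of "pi * e"] by (simp add: abs_mult)
    also have "\<dots> \<le> pi * \<delta>"
      using assms by (simp add: e_def)
    finally show ?thesis .
  qed
  then have "(sin (pi * e))\<^sup>2 \<le> (pi * \<delta>)\<^sup>2"
    by (metis abs_ge_zero power2_abs power_mono)
  ultimately show ?thesis
    by simp
qed

lemma int_independent_sin_sq_near_one:
  fixes \<theta> :: "nat \<Rightarrow> real"
  assumes ind: "int_independent \<theta> n" and "\<theta> n = 1" and "\<eta> > 0"
  obtains k :: nat where "k > 0" "\<And>i. i < n \<Longrightarrow> 1 - \<eta> \<le> (sin (pi * real k * \<theta> i))\<^sup>2"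
proof -
  define \<delta> where "\<delta> = min (sqrt \<eta>) (1/2) / pi"
  have "\<delta> > 0"
    using \<open>\<eta> > 0\<close> by (simp add: \<delta>_def)
  have "pi * \<delta> \<le> sqrt \<eta>" "pi * \<delta> \<le> 1/2" "pi * \<delta> \<ge> 0"
    using \<open>\<eta> > 0\<close> by (auto simp: \<delta>_def)
  then have "(pi * \<delta>)\<^sup>2 \<le> \<eta>" "(pi * \<delta>)\<^sup>2 \<le> 1/4"
    using power_mono[of "pi * \<delta>" "sqrt \<eta>" 2] power_mono[of "pi * \<delta>" "1/2" 2] \<open>\<eta> > 0\<close>
    by (auto simp: power_divide)
  obtain k m where km: "\<And>i. i < n \<Longrightarrow> \<bar>of_int k * \<theta> i - of_int (m i) - 1/2\<bar> < \<delta>"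
    using Kronecker_thm_2[OF int_independent_imp_independent[OF ind]
        int_independent_inj_on[OF ind] \<open>\<theta> n = 1\<close> \<open>\<delta> > 0\<close>, of "\<lambda>_. 1/2"] by blast
  have near: "1 - min \<eta> (1/4) \<le> (sin (pi * (of_int k * \<theta> i)))\<^sup>2" if "i < n" for i
    using sin_sq_ge_near_half_int[OF km[OF that]] \<open>(pi * \<delta>)\<^sup>2 \<le> \<eta>\<close> \<open>(pi * \<delta>)\<^sup>2 \<le> 1/4\<close>
    by linarith
  have abs_k: "(sin (pi * \<bar>of_int k\<bar> * y))\<^sup>2 = (sin (pi * (of_int k * y)))\<^sup>2" for y
    by (cases "k \<ge> 0") (simp_all add: mult.assoc)
  show thesis
  proof (cases "n = 0")
    case True
    then show thesis
      using that[of 1] by simp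
  next
    case False
    then have "k \<noteq> 0"
      using near[of 0] by auto
    show thesis
    proof (rule that)
      show "nat \<bar>k\<bar> > 0"
        using \<open>k \<noteq> 0\<close> by simp
      fix i
      assume "i < n"
      have "1 - \<eta> \<le> 1 - min \<eta> (1/4)"
        by simp
      also have "\<dots> \<le> (sin (pi * (of_int k * \<theta> i)))\<^sup>2"
        by (rule near[OF \<open>i < n\<close>])
      finally show "1 - \<eta> \<le> (sin (pi * real (nat \<bar>k\<bar>) * \<theta> i))\<^sup>2"
        by (simp add: abs_k)
    qed
  qed
qed

lemma log_one_plus_mult_ge:
  fixes A u :: real
  assumes "b > 1" "A \<ge> 0" "0 < u" "u \<le> 1"
  shows "log b (1 + A) + log b u \<le> log b (1 + A * u)"
proof -
  have "log b (1 + A) + log b u = log b ((1 + A) * u)"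
    using assms by (simp add: log_mult)
  also have "\<dots> \<le> log b (1 + A * u)"
    using assms by (intro log_mono) (auto simp: algebra_simps mult_left_le add_pos_nonneg)
  finally show ?thesis .
qed

lemma sum_rate_ge:
  assumes s2: "\<And>i. i \<in> {1,2,3} \<Longrightarrow> s2 i > 0" and "c > 0"
    and sin_ge: "\<And>i. i \<in> {1,2,3} \<Longrightarrow> c \<le> (sin (pi * real n * df_min t * dtau t i))\<^sup>2"
  shows "rate_bound h s2 + 3 * log 2 c \<le> sum_rate h s2 t n"
proof -
  have "log 2 (1 + (h i)\<^sup>2 / s2 i) + log 2 c
          \<le> log 2 (1 + (h i)\<^sup>2 * (sin (pi * real n * df_min t * dtau t i))\<^sup>2 / s2 i)"
    if i: "i \<in> {1,2,3}" for i
  proof -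
    define u where "u = (sin (pi * real n * df_min t * dtau t i))\<^sup>2"
    have "c \<le> u" "u \<le> 1"
      using sin_ge[OF i] by (auto simp: u_def abs_square_le_1)
    then have "log 2 (1 + (h i)\<^sup>2 / s2 i) + log 2 c \<le> log 2 (1 + (h i)\<^sup>2 / s2 i) + log 2 u"
      using \<open>c > 0\<close> by simp
    also have "\<dots> \<le> log 2 (1 + (h i)\<^sup>2 / s2 i * u)"
      using \<open>c \<le> u\<close> \<open>u \<le> 1\<close> \<open>c > 0\<close> s2[OF i] by (intro log_one_plus_mult_ge) auto
    finally show ?thesis
      by (simp add: u_def)
  qed
  then have "(\<Sum>i\<in>{1,2,3}. log 2 (1 + (h i)\<^sup>2 / s2 i) + log 2 c) \<le> sum_rate h s2 t n"
    unfolding sum_rate_def by (rule sum_mono)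
  then show ?thesis
    by (simp add: rate_bound_def sum.distrib)
qed

definition delay_forms :: "(nat \<Rightarrow> nat \<Rightarrow> real) \<Rightarrow> nat \<Rightarrow> real" where
  "delay_forms t j = (if j = 0 then S_sum t else dtau t j)"

lemma sum_atMost_3:
  fixes f :: "nat \<Rightarrow> 'a :: comm_monoid_add"
  shows "(\<Sum>i\<le>3. f i) = f 0 + f 1 + f 2 + f 3"
  by (simp add: eval_nat_numeral atMost_Suc ac_simps)

lemma int_independent_delay_forms_S_sum_nonzero:
  assumes "int_independent (delay_forms t) 3"
  shows "S_sum t \<noteq> 0"
proof
  assume "S_sum t = 0"
  then have "(\<Sum>j\<le>3. of_int (of_bool (j = 0)) * delay_forms t j) = 0"
    by (simp add: sum_atMost_3 delay_forms_def)
  with assms show False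
    unfolding int_independent_def by (auto dest!: spec[of _ "\<lambda>j. of_bool (j = 0)"])
qed

lemma int_independent_delay_ratios:
  assumes gen: "int_independent (delay_forms t) 3"
  shows "int_independent (\<lambda>i. if i < 3 then dtau t (i + 1) / S_sum t else 1) 3"
    (is "int_independent ?\<theta> 3")
  unfolding int_independent_def
proof (rule allI, rule impI)
  fix a :: "nat \<Rightarrow> int"
  assume "(\<Sum>i\<le>3. of_int (a i) * ?\<theta> i) = 0"
  define b where "b j = (if j = 0 then a 3 else a (j - 1))" for j
  have "(\<Sum>j\<le>3. of_int (b j) * delay_forms t j) = S_sum t * (\<Sum>i\<le>3. of_int (a i) * ?\<theta> i)"
    using int_independent_delay_forms_S_sum_nonzero[OF gen]
    by (simp add: sum_atMost_3 b_def delay_forms_def field_simps eval_nat_numeral)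
  with gen \<open>(\<Sum>i\<le>3. of_int (a i) * ?\<theta> i) = 0\<close> have "\<forall>j\<le>3. b j = 0"
    unfolding int_independent_def by simp
  show "\<forall>i\<le>3. a i = 0"
  proof (intro allI impI)
    fix i :: nat
    assume "i \<le> 3"
    then have "a i = b (if i = 3 then 0 else i + 1)" "(if i = 3 then 0 else i + 1) \<le> 3"
      by (auto simp: b_def)
    with \<open>\<forall>j\<le>3. b j = 0\<close> show "a i = 0"
      by simp
  qed
qed

lemma sum_rate_near_rate_bound:
  assumes gen: "int_independent (delay_forms t) 3"
    and s2: "\<And>i. i \<in> {1,2,3} \<Longrightarrow> s2 i > 0" and "\<epsilon> > 0"
  shows "\<exists>n>0. rate_bound h s2 - \<epsilon> \<le> sum_rate h s2 t n"
proof -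
  define c where "c = 2 powr (- \<epsilon> / 3)"
  have "0 < c" "c < 1"
    using powr_less_mono[of "- \<epsilon> / 3" 0 2] \<open>\<epsilon> > 0\<close> by (simp_all add: c_def)
  obtain n :: nat where "n > 0"
    and sin_ge: "\<And>i. i < 3 \<Longrightarrow> c \<le> (sin (pi * real n * (dtau t (i + 1) / S_sum t)))\<^sup>2"
    using int_independent_sin_sq_near_one[OF int_independent_delay_ratios[OF gen], of "1 - c"] \<open>c < 1\<close>
    by auto
  have "c \<le> (sin (pi * real n * df_min t * dtau t i))\<^sup>2" if "i \<in> {1,2,3}" for i
  proof -
    have "i - 1 < 3" "i - 1 + 1 = i"
      using that by auto
    then show ?thesis
      using sin_ge[of "i - 1"] by (simp add: df_min_def)
  qed
  then have "rate_bound h s2 + 3 * log 2 c \<le> sum_rate h s2 t n"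
    using sum_rate_ge[of s2 c n t h] s2 \<open>0 < c\<close> by blast
  then show ?thesis
    using \<open>n > 0\<close> by (auto simp: c_def)
qed

text \<open>\<open>delay_coeff a p\<close> is the coefficient of the delay \<open>t p\<close> in the integer combination \<open>a\<close> of
  the four linear forms, read off by evaluating them at the indicator of \<open>p\<close>.\<close>
definition delay_coeff :: "(nat \<Rightarrow> int) \<Rightarrow> nat \<times> nat \<Rightarrow> real" where
  "delay_coeff a p = (\<Sum>j\<le>3. of_int (a j) * delay_forms (\<lambda>i k. of_bool ((i, k) = p)) j)"

lemma lincomb_delay_forms:
  "(\<Sum>j\<le>3. of_int (a j) * delay_forms t j)
     = (\<Sum>p\<in>{1,2,3} \<times> {1,2,3}. delay_coeff a p * t (fst p) (snd p))"
  by (simp add: delay_coeff_def delay_forms_def S_sum_def dtau_def eval_nat_numeral atMost_Suc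
      algebra_simps)

lemma delay_coeff_nonzero:
  assumes "\<exists>j\<le>3. a j \<noteq> 0"
  shows "\<exists>p\<in>{1,2,3} \<times> {1,2,3}. delay_coeff a p \<noteq> 0"
proof -
  have "delay_coeff a (3, 1) = - a 0" "delay_coeff a (1, 1) = - a 1"
       "delay_coeff a (2, 2) = - a 2" "delay_coeff a (3, 3) = - a 3"
    by (simp_all add: delay_coeff_def delay_forms_def S_sum_def dtau_def eval_nat_numeral atMost_Suc)
  moreover obtain j where "j \<le> 3" "a j \<noteq> 0"
    using assms by blast
  then have "j = 0 \<or> j = 1 \<or> j = 2 \<or> j = 3"
    by auto
  ultimately show ?thesis
    using \<open>a j \<noteq> 0\<close> by force
qed

theorem lemma2:
  fixes M :: "'a measure" and tau :: "nat \<Rightarrow> nat \<Rightarrow> 'a \<Rightarrow> real"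
    and h :: "nat \<Rightarrow> real" and s2 :: "nat \<Rightarrow> real"
  assumes "prob_space M"
    and "prob_space.indep_vars M (\<lambda>_. borel) (\<lambda>(i, k). tau i k) ({1,2,3} \<times> {1,2,3})"
    and "\<And>i k. i \<in> {1,2,3} \<Longrightarrow> k \<in> {1,2,3} \<Longrightarrow> \<exists>f. distributed M lborel (tau i k) f"
    and "\<And>i. i \<in> {1,2,3} \<Longrightarrow> h i > 0"
    and "\<And>i. i \<in> {1,2,3} \<Longrightarrow> s2 i > 0"
  shows "AE \<omega> in M. \<forall>\<epsilon>>0. \<exists>n::nat. n > 0 \<and>
           sum_rate h s2 (\<lambda>i k. tau i k \<omega>) n \<ge> rate_bound h s2 - \<epsilon>"
proof -
  interpret prob_space M by fact
  have "AE \<omega> in M. int_independent (delay_forms (\<lambda>i k. tau i k \<omega>)) 3"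
  proof (rule AE_int_independent)
    fix a :: "nat \<Rightarrow> int"
    assume "\<exists>j\<le>3. a j \<noteq> 0"
    then obtain i k where ik: "i \<in> {1,2,3}" "k \<in> {1,2,3}" "delay_coeff a (i, k) \<noteq> 0"
      using delay_coeff_nonzero by blast
    obtain f where "distributed M lborel (tau i k) f"
      using assms(3)[OF ik(1,2)] by blast
    with ik have "AE \<omega> in M. (\<Sum>p\<in>{1,2,3} \<times> {1,2,3}. delay_coeff a p * (\<lambda>(i, k). tau i k) p \<omega>) \<noteq> 0"
      by (intro AE_lincomb_indep_nonzero[OF assms(2), of "(i, k)" f]) auto
    then show "AE \<omega> in M. (\<Sum>j\<le>3. of_int (a j) * delay_forms (\<lambda>i k. tau i k \<omega>) j) \<noteq> 0"
      by (simp add: lincomb_delay_forms case_prod_beta)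
  qed
  then show ?thesis
    by (rule eventually_mono) (use sum_rate_near_rate_bound assms(5) in auto)
qed

end
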